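(* Let $a,b$ be positive integers and $n\ge2$ an integer, and let $h(j)=aj^n+b$ for $j\ge0$, $h(j)=0$ for $j<0$. If $\lfloor a/b\rfloor+1\ge 4$, then $\operatorname{hdepth}(h)\ge4$.
   Context: For a nonzero function $h:\mathbb Z\to\mathbb Z_{\ge 0}$ with $h(j)=0$ for all sufficiently negative $j$, and integers $k\le d$, set $\beta_k^d(h)=\sum_{j\le k}(-1)^{k-j}\binom{d-j}{k-j}h(j)$, and $\operatorname{hdepth}(h)=\max\{d\in\mathbb Z:\ \beta_k^d(h)\ge 0\text{ for all integers }k\le d\}$. *)

theory Defs
  imports Complex_Main
begin

text \<open>The sum ranges over the (finite, since h vanishes for sufficiently negative j)
  set of j <= k with h j nonzero; terms with h j = 0 contribute nothing.
  Only meaningful for k <= d (then d-j >= k-j >= 0).\<close>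
definition hbeta :: "(int \<Rightarrow> int) \<Rightarrow> int \<Rightarrow> int \<Rightarrow> int" where
  "hbeta h k d = (\<Sum>j\<in>{j. j \<le> k \<and> h j \<noteq> 0}.
      (-1) ^ nat (k - j) * int (nat (d - j) choose nat (k - j)) * h j)"

definition hdepth :: "(int \<Rightarrow> int) \<Rightarrow> int" where
  "hdepth h = (GREATEST d. \<forall>k. k \<le> d \<longrightarrow> hbeta h k d \<ge> 0)"

end

theory Submission
  imports Defs
begin

text \<open>Since \<open>h(0) > 0\<close>, the condition \<open>\<beta>\<^sub>1\<^sup>d(h) = h(1) - d h(0) \<ge> 0\<close> bounds the admissible \<open>d\<close>, so
  \<open>hdepth h \<ge> 4\<close> amounts to \<open>\<beta>\<^sub>k\<^sup>4(h) \<ge> 0\<close> for \<open>k \<le> 4\<close>. For \<open>h(j) = a j\<^sup>n + b\<close> these five numbers are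
  \<open>b\<close>, \<open>a - 3b\<close>, \<open>a(2\<^sup>n - 3) + 4b\<close>, \<open>a(3\<^sup>n - 2\<cdot>2\<^sup>n + 3) - 2b\<close> and \<open>a(4\<^sup>n - 3\<^sup>n + 2\<^sup>n - 1) + b\<close>;
  all are nonnegative once \<open>a \<ge> 3b\<close>, because \<open>2\<^sup>n \<ge> 4\<close> and \<open>3\<^sup>n \<ge> 2\<cdot>2\<^sup>n\<close> for \<open>n \<ge> 2\<close>.\<close>

lemma Greatest_int_ge:
  fixes P :: "int \<Rightarrow> bool"
  assumes "P x" and bounded: "\<And>y. P y \<Longrightarrow> y \<le> B"
  shows "x \<le> (GREATEST y. P y)"
proof -
  define S where "S = {y \<in> {x..B}. P y}"
  have "finite S" by (simp add: S_def finite_subset[of _ "{x..B}"] subset_iff)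
  have "x \<in> S" using assms by (simp add: S_def)
  then have "Max S \<in> S" using \<open>finite S\<close> by (intro Max_in) auto
  then have "P (Max S)" by (simp add: S_def)
  moreover have "y \<le> Max S" if "P y" for y
  proof -
    have "max x y \<in> S" using that assms by (simp add: S_def max_def)
    then show ?thesis using \<open>finite S\<close> Max_ge by fastforce
  qed
  ultimately have "(GREATEST y. P y) = Max S" by (rule Greatest_equality)
  with \<open>finite S\<close> \<open>x \<in> S\<close> show ?thesis by simp
qed

lemma hbeta_eq_sum_atLeastAtMost:
  assumes "\<And>j. j < 0 \<Longrightarrow> h j = 0"
  shows "hbeta h k d = (\<Sum>j=0..k. (-1) ^ nat (k - j) * int (nat (d - j) choose nat (k - j)) * h j)"
  unfolding hbeta_def
proof (rule sum.mono_neutral_left)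
  show "{j. j \<le> k \<and> h j \<noteq> 0} \<subseteq> {0..k}"
    using assms by (force simp: not_less[symmetric])
qed auto

lemma hbeta_1:
  assumes "\<And>j. j < 0 \<Longrightarrow> h j = 0" and "d \<ge> 0"
  shows "hbeta h 1 d = h 1 - d * h 0"
proof -
  have "{0..1::int} = {0, 1}" by auto
  with assms show ?thesis by (simp add: hbeta_eq_sum_atLeastAtMost)
qed

lemma le_hdepth:
  assumes "\<And>j. j < 0 \<Longrightarrow> h j = 0" and "h 0 > 0"
    and "\<forall>k \<le> d. hbeta h k d \<ge> 0"
  shows "d \<le> hdepth h"
  unfolding hdepth_def
proof (rule Greatest_int_ge)
  fix e assume e: "\<forall>k \<le> e. hbeta h k e \<ge> 0"
  show "e \<le> max 0 (h 1)"
  proof (cases "e \<ge> 1")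
    case True
    then have "e * h 0 \<le> h 1" using e assms(1) hbeta_1[of h e] by force
    moreover have "e \<le> e * h 0" using True assms(2) by simp
    ultimately show ?thesis by linarith
  qed simp
qed (use assms in blast)

lemma hbeta_4:
  assumes "\<And>j. j < 0 \<Longrightarrow> h j = 0"
  shows "hbeta h 0 4 = h 0"
    and "hbeta h 1 4 = h 1 - 4 * h 0"
    and "hbeta h 2 4 = h 2 - 3 * h 1 + 6 * h 0"
    and "hbeta h 3 4 = h 3 - 2 * h 2 + 3 * h 1 - 4 * h 0"
    and "hbeta h 4 4 = h 4 - h 3 + h 2 - h 1 + h 0"
proof -
  have "{0..1::int} = {0, 1}" "{0..2::int} = {0, 1, 2}" "{0..3::int} = {0, 1, 2, 3}" "{0..4::int} = {0, 1, 2, 3, 4}"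
    by auto
  with assms show "hbeta h 0 4 = h 0" "hbeta h 1 4 = h 1 - 4 * h 0"
    "hbeta h 2 4 = h 2 - 3 * h 1 + 6 * h 0" "hbeta h 3 4 = h 3 - 2 * h 2 + 3 * h 1 - 4 * h 0"
    "hbeta h 4 4 = h 4 - h 3 + h 2 - h 1 + h 0"
    by (simp_all add: hbeta_eq_sum_atLeastAtMost numeral_eq_Suc)
qed

lemma hbeta_4_nonneg:
  assumes "\<And>j. j < 0 \<Longrightarrow> h j = 0"
    and "h 0 \<ge> 0" "4 * h 0 \<le> h 1" "3 * h 1 \<le> h 2 + 6 * h 0"
    "2 * h 2 + 4 * h 0 \<le> h 3 + 3 * h 1" "h 3 + h 1 \<le> h 4 + h 2 + h 0"
  shows "\<forall>k \<le> 4. hbeta h k 4 \<ge> 0"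
proof (intro allI impI)
  fix k :: int assume "k \<le> 4"
  then consider "k < 0" | "k = 0" | "k = 1" | "k = 2" | "k = 3" | "k = 4" by linarith
  then show "hbeta h k 4 \<ge> 0"
    by cases (use assms hbeta_4[OF assms(1)] in \<open>simp_all add: hbeta_def\<close>)
qed

lemma two_power_le_three_power:
  assumes "n \<ge> 2"
  shows "4 \<le> (2::int) ^ n" and "2 * 2 ^ n \<le> (3::int) ^ n"
proof -
  obtain m where n: "n = m + 2" using assms by (metis add.commute le_Suc_ex)
  have "(2::int) ^ m \<le> 3 ^ m" by (rule power_mono) auto
  then have "8 * (2::int) ^ m \<le> 9 * 3 ^ m" using zero_le_power[of "3::int" m] by linarith
  then show "2 * 2 ^ n \<le> (3::int) ^ n" unfolding n by (simp add: power_add)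
  show "4 \<le> (2::int) ^ n" unfolding n by (simp add: power_add)
qed

theorem lemma3p8:
  fixes a b :: int and n :: nat
  assumes "a > 0" and "b > 0" and "n \<ge> 2"
    and "\<lfloor>real_of_int a / real_of_int b\<rfloor> + 1 \<ge> 4"
  shows "hdepth (\<lambda>j. if j \<ge> 0 then a * j ^ n + b else 0) \<ge> 4"
proof -
  define h where "h = (\<lambda>j::int. if j \<ge> 0 then a * j ^ n + b else 0)"
  have "3 \<le> real_of_int a / real_of_int b" using assms(4) by (simp add: le_floor_iff)
  then have ab: "3 * b \<le> a" using assms(2) by (simp add: field_simps)
  have "0 ^ n = (0::int)" using assms(3) by simp
  then have h_values: "h 0 = b" "h 1 = a + b" "h 2 = a * 2 ^ n + b" "h 3 = a * 3 ^ n + b"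
    "h 4 = a * 4 ^ n + b" by (simp_all add: h_def)
  have pow: "4 * a \<le> a * 2 ^ n" "2 * (a * 2 ^ n) \<le> a * 3 ^ n" "a * 3 ^ n \<le> a * (4::int) ^ n"
    using mult_left_mono[OF two_power_le_three_power(1)[OF assms(3)], of a]
      mult_left_mono[OF two_power_le_three_power(2)[OF assms(3)], of a]
      mult_left_mono[OF power_mono[of "3::int" 4 n], of a] assms(1)
    by (simp_all add: ac_simps)
  have h_neg: "\<And>j. j < 0 \<Longrightarrow> h j = 0" by (simp add: h_def)
  have "\<forall>k \<le> 4. hbeta h k 4 \<ge> 0"
    by (rule hbeta_4_nonneg[OF h_neg]) (use ab assms(2) pow in \<open>simp only: h_values; arith\<close>)+
  then have "4 \<le> hdepth h" using assms(2) h_values(1) by (intro le_hdepth[OF h_neg]) simp_all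
  then show ?thesis by (simp add: h_def)
qed

end
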